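(* Assume that $\Pr[\mathit{QH} > 1/\Delta] \leq \varepsilon$. Then the procedure $\mathbf{Detect}(U,\Delta,\varepsilon)$ accepts $\ket{\psi}$ with probability $\|\psi\|^2-\delta_0^2-\mathrm{O}(\varepsilon)$, and with probability $0$ if $|\delta_0|=\|\psi\|$. In addition, the number of applications of the controlled operator $\text{c-}U$ is $\mathrm{O}(\log(1/\varepsilon)/\Delta)$.
   Context: Let $U$ be a unitary matrix with real entries. Its eigenvalues are $1$, $-1$, and pairs of conjugate complex numbers $(e^{i\alpha_j},e^{-i\alpha_j})$ with $0<\alpha_j<\pi$, $1\le j\le J$. Let $\ket{\psi}$ be a vector with real entries and norm at most one; it decomposes uniquely as $\ket{\psi}=\delta_0\ket{w_0}+\sum_{1\le j\le J}\delta_j(\ket{w_j^+}+\ket{w_j^-})+\delta_{-1}\ket{w_{-1}}$, where $\delta_0,\delta_{-1},\delta_j$ are reals, $\ket{w_0}$ is a unit eigenvector of $U$ with eigenvalue $1$, $\ket{w_{-1}}$ a unit eigenvector with eigenvalue $-1$, and $\ket{w_j^\pm}$ unit eigenvectors with eigenvalues $e^{\pm i\alpha_j}$, $\ket{w_j^-}=\overline{\ket{w_j^+}}$. Let $\mathit{QH}$ be the random variable taking value $1/\alpha_j$ with probability $2\delta_j^2$, value $1/\pi$ with probability $\delta_{-1}^2$, and $0$ otherwise (probabilities sum to $\|\psi\|^2$). Let $\mathbf{Estimate}$ be the phase estimation circuit (Kitaev; Cleve et al.) which, given an eigenvector of $U$ with eigenvalue $e^{i\alpha}$, determines $\alpha\in(-\pi,\pi]$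 with precision $\Delta$ and error probability at most $1/3$, determines $\alpha=0$ with probability $1$ on a $1$-eigenvector, and uses $\mathrm{O}(1/\Delta)$ calls to $\text{c-}U$ and its inverse. The procedure $\mathbf{Detect}(U,\Delta,\varepsilon)$ on input $\ket{\psi}$: apply $\Theta(\log(1/\varepsilon))$ times $\mathbf{Estimate}$ for $U$ with precision $\Delta$ to the same state $\ket{\psi}$; if at least one estimated phase is nonzero, accept, otherwise reject. *)

theory Defs
  imports Complex_Main "HOL-Library.FuncSet"
begin

(* Vectors of C^n are modelled as functions nat => complex, only indices < n matter;
   n x n matrices as nat => nat => complex. *)

definition vnorm2 :: "nat \<Rightarrow> (nat \<Rightarrow> complex) \<Rightarrow> real" where
  "vnorm2 n v = (\<Sum>x<n. (cmod (v x))^2)"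

definition mat_vec :: "nat \<Rightarrow> (nat \<Rightarrow> nat \<Rightarrow> complex) \<Rightarrow> (nat \<Rightarrow> complex) \<Rightarrow> nat \<Rightarrow> complex" where
  "mat_vec n U v x = (\<Sum>y<n. U x y * v y)"

definition is_eigvec :: "nat \<Rightarrow> (nat \<Rightarrow> nat \<Rightarrow> complex) \<Rightarrow> complex \<Rightarrow> (nat \<Rightarrow> complex) \<Rightarrow> bool" where
  "is_eigvec n U lam v \<longleftrightarrow> (\<forall>x<n. mat_vec n U v x = lam * v x)"

definition unitary_mat :: "nat \<Rightarrow> (nat \<Rightarrow> nat \<Rightarrow> complex) \<Rightarrow> bool" where
  "unitary_mat n U \<longleftrightarrow>
     (\<forall>i<n. \<forall>j<n. (\<Sum>k<n. cnj (U k i) * U k j) = (if i = j then 1 else 0))"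

definition real_mat :: "nat \<Rightarrow> (nat \<Rightarrow> nat \<Rightarrow> complex) \<Rightarrow> bool" where
  "real_mat n U \<longleftrightarrow> (\<forall>i<n. \<forall>j<n. Im (U i j) = 0)"

definition real_vec :: "nat \<Rightarrow> (nat \<Rightarrow> complex) \<Rightarrow> bool" where
  "real_vec n v \<longleftrightarrow> (\<forall>x<n. Im (v x) = 0)"

(* A unit eigenvector is only required for a component
   whose coefficient is nonzero (a zero component contributes nothing). *)
definition spectral_decomp ::
  "nat \<Rightarrow> (nat \<Rightarrow> nat \<Rightarrow> complex) \<Rightarrow> (nat \<Rightarrow> complex) \<Rightarrow>
   real \<Rightarrow> (nat \<Rightarrow> complex) \<Rightarrow> nat \<Rightarrow> (nat \<Rightarrow> real) \<Rightarrow> (nat \<Rightarrow> real) \<Rightarrow>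
   (nat \<Rightarrow> nat \<Rightarrow> complex) \<Rightarrow> real \<Rightarrow> (nat \<Rightarrow> complex) \<Rightarrow> bool" where
  "spectral_decomp n U \<psi> d0 w0 J d a wp dm1 wm1 \<longleftrightarrow>
     (d0 \<noteq> 0 \<longrightarrow> is_eigvec n U 1 w0 \<and> vnorm2 n w0 = 1) \<and>
     (dm1 \<noteq> 0 \<longrightarrow> is_eigvec n U (-1) wm1 \<and> vnorm2 n wm1 = 1) \<and>
     (\<forall>j\<in>{1..J}. 0 < a j \<and> a j < pi) \<and> inj_on a {1..J} \<and>
     (\<forall>j\<in>{1..J}. d j \<noteq> 0 \<longrightarrow>
         is_eigvec n U (cis (a j)) (wp j) \<and> vnorm2 n (wp j) = 1 \<and>
         is_eigvec n U (cis (- a j)) (\<lambda>x. cnj (wp j x)) \<and>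
         vnorm2 n (\<lambda>x. cnj (wp j x)) = 1) \<and>
     (\<forall>x<n. \<psi> x = of_real d0 * w0 x
                 + (\<Sum>j\<in>{1..J}. of_real (d j) * (wp j x + cnj (wp j x)))
                 + of_real dm1 * wm1 x)"

(* Pr[QH > t], where QH takes value 1/a_j with prob 2 d_j^2, 1/pi with prob dm1^2,
   and 0 with the remaining probability d0^2. *)
definition QH_tail :: "nat \<Rightarrow> (nat \<Rightarrow> real) \<Rightarrow> (nat \<Rightarrow> real) \<Rightarrow> real \<Rightarrow> real \<Rightarrow> real \<Rightarrow> real" where
  "QH_tail J d a dm1 d0 t =
     (\<Sum>j\<in>{j\<in>{1..J}. 1 / a j > t}. 2 * (d j)^2)
     + (if 1 / pi > t then dm1^2 else 0)
     + (if 0 > t then d0^2 else 0)"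

definition phase_dist :: "real \<Rightarrow> real \<Rightarrow> real" where
  "phase_dist \<alpha> \<beta> = \<bar>Arg (cis (\<alpha> - \<beta>))\<bar>"

(* Phase estimation circuit Estimate with precision Delta: ancilla register with
   computational basis {0..<m}; on input (eigenvector w with eigenvalue cis alpha) (x) |0>
   it outputs w (x) phi alpha; measuring basis state b yields the estimate dec b. *)
definition estimate_spec :: "nat \<Rightarrow> (real \<Rightarrow> nat \<Rightarrow> complex) \<Rightarrow> (nat \<Rightarrow> real) \<Rightarrow> real \<Rightarrow> bool" where
  "estimate_spec m \<phi> dec \<Delta> \<longleftrightarrow>
     (\<forall>b<m. - pi < dec b \<and> dec b \<le> pi) \<and>
     (\<forall>\<alpha>. (\<Sum>b<m. (cmod (\<phi> \<alpha> b))^2) = 1) \<and>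
     (\<Sum>b\<in>{b. b < m \<and> dec b \<noteq> 0}. (cmod (\<phi> 0 b))^2) = 0 \<and>
     (\<forall>\<alpha>. - pi < \<alpha> \<and> \<alpha> \<le> pi \<longrightarrow>
        (\<Sum>b\<in>{b. b < m \<and> phase_dist (dec b) \<alpha> < \<Delta>}. (cmod (\<phi> \<alpha> b))^2) \<ge> 2/3)"

definition phase_prod :: "(real \<Rightarrow> nat \<Rightarrow> complex) \<Rightarrow> nat \<Rightarrow> real \<Rightarrow> (nat \<Rightarrow> nat) \<Rightarrow> complex" where
  "phase_prod \<phi> k \<alpha> s = (\<Prod>i<k. \<phi> \<alpha> (s i))"

(* amplitude of basis state x (x) s_0 (x) ... (x) s_{k-1} after k applications of Estimate
   (each on a fresh ancilla register) to psi, by linearity over the eigen-decomposition *)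
definition detect_amp ::
  "(real \<Rightarrow> nat \<Rightarrow> complex) \<Rightarrow> nat \<Rightarrow> real \<Rightarrow> (nat \<Rightarrow> complex) \<Rightarrow> nat \<Rightarrow> (nat \<Rightarrow> real) \<Rightarrow>
   (nat \<Rightarrow> real) \<Rightarrow> (nat \<Rightarrow> nat \<Rightarrow> complex) \<Rightarrow> real \<Rightarrow> (nat \<Rightarrow> complex) \<Rightarrow>
   nat \<Rightarrow> (nat \<Rightarrow> nat) \<Rightarrow> complex" where
  "detect_amp \<phi> k d0 w0 J d a wp dm1 wm1 x s =
     of_real d0 * w0 x * phase_prod \<phi> k 0 s
     + (\<Sum>j\<in>{1..J}. of_real (d j) *
          (wp j x * phase_prod \<phi> k (a j) s + cnj (wp j x) * phase_prod \<phi> k (- a j) s))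
     + of_real dm1 * wm1 x * phase_prod \<phi> k pi s"

(* Detect accepts iff at least one of the k estimated phases is nonzero (Born rule) *)
definition detect_accept_prob ::
  "nat \<Rightarrow> nat \<Rightarrow> (nat \<Rightarrow> real) \<Rightarrow> (real \<Rightarrow> nat \<Rightarrow> complex) \<Rightarrow> nat \<Rightarrow>
   real \<Rightarrow> (nat \<Rightarrow> complex) \<Rightarrow> nat \<Rightarrow> (nat \<Rightarrow> real) \<Rightarrow>
   (nat \<Rightarrow> real) \<Rightarrow> (nat \<Rightarrow> nat \<Rightarrow> complex) \<Rightarrow> real \<Rightarrow> (nat \<Rightarrow> complex) \<Rightarrow> real" where
  "detect_accept_prob n m dec \<phi> k d0 w0 J d a wp dm1 wm1 =
     (\<Sum>x<n. \<Sum>s\<in>{s \<in> PiE {..<k} (\<lambda>_. {..<m}). \<exists>i<k. dec (s i) \<noteq> 0}.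
        (cmod (detect_amp \<phi> k d0 w0 J d a wp dm1 wm1 x s))^2)"

end

theory Submission
  imports Defs
begin

text \<open>Expand \<open>\<psi>\<close> in the orthonormal eigenvectors of its decomposition, with coefficients
  \<open>c\<^sub>i\<close> and phases \<open>\<alpha>\<^sub>i\<close>. Each run of \<open>Estimate\<close> acts on the eigencomponents separately, so if
  \<open>q \<alpha>\<close> is the probability that one run returns 0 on an eigenvector of phase \<open>\<alpha>\<close>, then \<open>k\<close>
  runs accept with probability \<open>\<Sum>\<^sub>i c\<^sub>i\<^sup>2 (1 - (q \<alpha>\<^sub>i)\<^sup>k)\<close>. As \<open>q 0 = 1\<close>, this falls short of
  \<open>\<parallel>\<psi>\<parallel>\<^sup>2 - \<delta>\<^sub>0\<^sup>2\<close> by the sum of \<open>c\<^sub>i\<^sup>2 (q \<alpha>\<^sub>i)\<^sup>k\<close> over the nonzero phases. Phases with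
  \<open>\<bar>\<alpha>\<^sub>i\<bar> \<ge> \<Delta>\<close> have \<open>q \<alpha>\<^sub>i \<le> 1/3\<close> and contribute at most \<open>\<epsilon>\<close> once \<open>k = \<lceil>ln (1/\<epsilon>)\<rceil>\<close>;
  nonzero phases with \<open>\<bar>\<alpha>\<^sub>i\<bar> < \<Delta>\<close> carry total weight \<open>Pr[QH > 1/\<Delta>] \<le> \<epsilon>\<close>.\<close>

lemma sum_lessThan_split:
  fixes f :: "nat \<Rightarrow> 'a::comm_monoid_add"
  shows "(\<Sum>b<m. f b) = (\<Sum>b\<in>{b. b < m \<and> P b}. f b) + (\<Sum>b\<in>{b. b < m \<and> \<not> P b}. f b)"
proof -
  have "{..<m} = {b. b < m \<and> P b} \<union> {b. b < m \<and> \<not> P b}" by auto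
  then show ?thesis
    by (simp only:) (rule sum.union_disjoint, auto)
qed

lemma sum_atMost_split_first:
  fixes f :: "nat \<Rightarrow> 'a::comm_monoid_add"
  shows "(\<Sum>i\<le>N. f i) = f 0 + (\<Sum>i\<in>{1..N}. f i)"
proof -
  have "{..N} = insert 0 {1..N}" by auto
  then show ?thesis by simp
qed

lemma unitary_mat_inner:
  assumes "unitary_mat n U"
  shows "(\<Sum>x<n. cnj (mat_vec n U w x) * mat_vec n U v x) = (\<Sum>y<n. cnj (w y) * v y)"
proof -
  let ?F = "\<lambda>x y z. cnj (w y) * v z * (cnj (U x y) * U x z)"
  have "(\<Sum>x<n. cnj (mat_vec n U w x) * mat_vec n U v x)
      = (\<Sum>x<n. \<Sum>y<n. \<Sum>z<n. ?F x y z)"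
    unfolding mat_vec_def cnj_sum sum_product by (simp add: mult_ac)
  also have "\<dots> = (\<Sum>y<n. \<Sum>z<n. \<Sum>x<n. ?F x y z)"
    by (subst sum.swap, rule sum.cong[OF refl], rule sum.swap)
  also have "\<dots> = (\<Sum>y<n. \<Sum>z<n. cnj (w y) * v z * (\<Sum>x<n. cnj (U x y) * U x z))"
    by (simp only: sum_distrib_left)
  also have "\<dots> = (\<Sum>y<n. \<Sum>z<n. if y = z then cnj (w y) * v z else 0)"
    using assms unfolding unitary_mat_def by (intro sum.cong refl) auto
  also have "\<dots> = (\<Sum>y<n. cnj (w y) * v y)"
    by (simp add: sum.delta)
  finally show ?thesis .
qed

lemma cis_inj_half_open:
  assumes "- pi < x" "x \<le> pi" "- pi < y" "y \<le> pi" "cis x = cis y"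
  shows "x = y"
  using cis_Arg_unique[OF sgn_cis assms(1,2)] cis_Arg_unique[OF sgn_cis assms(3,4)] assms(5) by metis

text \<open>As \<open>U\<close> preserves inner products, \<open>\<langle>w, v\<rangle> = cnj \<mu> * l * \<langle>w, v\<rangle>\<close>, and \<open>cnj \<mu> * l \<noteq> 1\<close>
  because \<open>\<bar>\<mu>\<bar> = 1\<close>.\<close>
lemma eigvec_orthogonal:
  assumes "unitary_mat n U" "is_eigvec n U l v" "is_eigvec n U \<mu> w" "l \<noteq> \<mu>" "cmod \<mu> = 1"
  shows "(\<Sum>y<n. cnj (w y) * v y) = 0"
proof -
  have "(\<Sum>y<n. cnj (w y) * v y) = (\<Sum>x<n. cnj (\<mu> * w x) * (l * v x))"
    using unitary_mat_inner[OF assms(1), of w v] assms(2,3) unfolding is_eigvec_def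
    by (metis (no_types, lifting) lessThan_iff sum.cong)
  also have "\<dots> = cnj \<mu> * l * (\<Sum>y<n. cnj (w y) * v y)"
    by (simp add: sum_distrib_left mult_ac)
  finally have "(1 - cnj \<mu> * l) * (\<Sum>y<n. cnj (w y) * v y) = 0"
    by (simp add: algebra_simps)
  moreover have "cnj \<mu> * l \<noteq> 1"
  proof
    assume "cnj \<mu> * l = 1"
    moreover have "\<mu> * cnj \<mu> = 1"
      using assms(5) by (metis complex_norm_square of_real_1 power_one)
    ultimately have "l = \<mu>"
      by (metis mult.assoc mult.left_neutral mult.right_neutral)
    with assms(4) show False ..
  qed
  ultimately show ?thesis by simp
qed

lemma norm2_sum_orthonormal:
  fixes c :: "'i \<Rightarrow> complex" and v :: "'i \<Rightarrow> nat \<Rightarrow> complex"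
  assumes "finite T"
    and orth: "\<And>i j. i \<in> T \<Longrightarrow> j \<in> T \<Longrightarrow> c i \<noteq> 0 \<Longrightarrow> c j \<noteq> 0 \<Longrightarrow>
                 (\<Sum>x<n. cnj (v j x) * v i x) = (if i = j then 1 else 0)"
  shows "(\<Sum>x<n. (cmod (\<Sum>i\<in>T. c i * v i x))^2) = (\<Sum>i\<in>T. (cmod (c i))^2)"
proof -
  let ?F = "\<lambda>x i j. c i * cnj (c j) * (cnj (v j x) * v i x)"
  have "complex_of_real (\<Sum>x<n. (cmod (\<Sum>i\<in>T. c i * v i x))^2)
      = (\<Sum>x<n. \<Sum>i\<in>T. \<Sum>j\<in>T. ?F x i j)"
    unfolding of_real_sum complex_norm_square cnj_sum sum_product by (simp add: mult_ac)
  also have "\<dots> = (\<Sum>i\<in>T. \<Sum>x<n. \<Sum>j\<in>T. ?F x i j)"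
    by (rule sum.swap)
  also have "\<dots> = (\<Sum>i\<in>T. \<Sum>j\<in>T. \<Sum>x<n. ?F x i j)"
    by (rule sum.cong[OF refl], rule sum.swap)
  also have "\<dots> = (\<Sum>i\<in>T. \<Sum>j\<in>T. c i * cnj (c j) * (\<Sum>x<n. cnj (v j x) * v i x))"
    by (simp only: sum_distrib_left)
  also have "\<dots> = (\<Sum>i\<in>T. \<Sum>j\<in>T. if i = j then c i * cnj (c j) else 0)"
  proof (intro sum.cong refl)
    fix i j assume "i \<in> T" "j \<in> T"
    then show "c i * cnj (c j) * (\<Sum>x<n. cnj (v j x) * v i x) = (if i = j then c i * cnj (c j) else 0)"
      using orth[of i j] by (cases "c i = 0 \<or> c j = 0") auto
  qed
  also have "\<dots> = (\<Sum>i\<in>T. c i * cnj (c i))"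
    using assms(1) by (simp add: sum.delta)
  also have "\<dots> = complex_of_real (\<Sum>i\<in>T. (cmod (c i))^2)"
    unfolding of_real_sum complex_norm_square ..
  finally show ?thesis using of_real_eq_iff by blast
qed

definition estimate_zero_prob ::
    "nat \<Rightarrow> (real \<Rightarrow> nat \<Rightarrow> complex) \<Rightarrow> (nat \<Rightarrow> real) \<Rightarrow> real \<Rightarrow> real" where
  "estimate_zero_prob m \<phi> dec \<alpha> = (\<Sum>b\<in>{b. b < m \<and> dec b = 0}. (cmod (\<phi> \<alpha> b))^2)"

lemma estimate_zero_prob_nonneg: "0 \<le> estimate_zero_prob m \<phi> dec \<alpha>"
  unfolding estimate_zero_prob_def by (rule sum_nonneg) simp

lemma detect_accept_prob_nonneg: "0 \<le> detect_accept_prob n m dec \<phi> k d0 w0 J d a wp dm1 wm1"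
  unfolding detect_accept_prob_def by (intro sum_nonneg) simp

lemma phase_dist_0_left:
  assumes "- pi < \<alpha>" "\<alpha> \<le> pi"
  shows "phase_dist 0 \<alpha> = \<bar>\<alpha>\<bar>"
proof (cases "\<alpha> = pi")
  case True
  have "cis (0 - \<alpha>) = cis pi" using True by (simp add: complex_eq_iff)
  moreover have "Arg (cis pi) = pi" by (rule cis_Arg_unique[OF sgn_cis]) auto
  ultimately show ?thesis unfolding phase_dist_def using True by simp
next
  case False
  have "Arg (cis (- \<alpha>)) = - \<alpha>" by (rule cis_Arg_unique[OF sgn_cis]) (use assms False in auto)
  then show ?thesis unfolding phase_dist_def by simp
qed

context
  fixes m \<phi> dec \<Delta>
  assumes spec: "estimate_spec m \<phi> dec \<Delta>"
begin

lemma estimate_zero_prob_complement: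
  "estimate_zero_prob m \<phi> dec \<alpha> = 1 - (\<Sum>b\<in>{b. b < m \<and> dec b \<noteq> 0}. (cmod (\<phi> \<alpha> b))^2)"
  using spec sum_lessThan_split[of "\<lambda>b. (cmod (\<phi> \<alpha> b))^2" m "\<lambda>b. dec b = 0"]
  unfolding estimate_spec_def estimate_zero_prob_def by simp

lemma estimate_zero_prob_le_1: "estimate_zero_prob m \<phi> dec \<alpha> \<le> 1"
proof -
  have "0 \<le> (\<Sum>b\<in>{b. b < m \<and> dec b \<noteq> 0}. (cmod (\<phi> \<alpha> b))^2)"
    by (rule sum_nonneg) simp
  then show ?thesis unfolding estimate_zero_prob_complement by simp
qed

lemma estimate_zero_prob_at_0: "estimate_zero_prob m \<phi> dec 0 = 1"
  using spec unfolding estimate_zero_prob_complement estimate_spec_def by simp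

lemma estimate_zero_prob_far:
  assumes "- pi < \<alpha>" "\<alpha> \<le> pi" "\<Delta> \<le> \<bar>\<alpha>\<bar>"
  shows "estimate_zero_prob m \<phi> dec \<alpha> \<le> 1/3"
proof -
  let ?f = "\<lambda>b. (cmod (\<phi> \<alpha> b))^2"
  let ?near = "\<lambda>b. phase_dist (dec b) \<alpha> < \<Delta>"
  have "(\<Sum>b<m. ?f b) = 1" and "(\<Sum>b\<in>{b. b < m \<and> ?near b}. ?f b) \<ge> 2/3"
    using spec assms(1,2) unfolding estimate_spec_def by blast+
  then have "(\<Sum>b\<in>{b. b < m \<and> \<not> ?near b}. ?f b) \<le> 1/3"
    using sum_lessThan_split[of ?f m ?near] by linarith
  moreover have "estimate_zero_prob m \<phi> dec \<alpha> \<le> (\<Sum>b\<in>{b. b < m \<and> \<not> ?near b}. ?f b)"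
    unfolding estimate_zero_prob_def
    by (rule sum_mono2) (use phase_dist_0_left[OF assms(1,2)] assms(3) in auto)
  ultimately show ?thesis by linarith
qed

text \<open>The \<open>k\<close> runs of \<open>Estimate\<close> are independent, so all of them return 0 with probability \<open>q\<^sup>k\<close>.\<close>
lemma estimate_runs_nonzero_prob:
  "(\<Sum>s\<in>{s \<in> PiE {..<k} (\<lambda>_. {..<m}). \<exists>i<k. dec (s i) \<noteq> 0}. (cmod (phase_prod \<phi> k \<alpha> s))^2)
     = 1 - (estimate_zero_prob m \<phi> dec \<alpha>)^k"
proof -
  let ?Z = "{b. b < m \<and> dec b = 0}"
  let ?f = "\<lambda>b. (cmod (\<phi> \<alpha> b))^2"
  have power_sum: "(\<Sum>s\<in>PiE {..<k} (\<lambda>_. B). \<Prod>l<k. ?f (s l)) = (\<Sum>b\<in>B. ?f b)^k"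
    if "finite B" for B
    using prod_sum_PiE[of "{..<k}" "\<lambda>_. B" "\<lambda>_ b. ?f b"] that by simp
  have accepting: "{s \<in> PiE {..<k} (\<lambda>_. {..<m}). \<exists>i<k. dec (s i) \<noteq> 0}
      = PiE {..<k} (\<lambda>_. {..<m}) - PiE {..<k} (\<lambda>_. ?Z)"
    unfolding set_eq_iff Diff_iff mem_Collect_eq PiE_iff lessThan_iff by blast
  have "PiE {..<k} (\<lambda>_. ?Z) \<subseteq> PiE {..<k} (\<lambda>_. {..<m})" by (auto simp: PiE_iff)
  moreover have "(cmod (phase_prod \<phi> k \<alpha> s))^2 = (\<Prod>l<k. ?f (s l))" for s
    unfolding phase_prod_def prod_norm[symmetric] by (simp add: prod_power_distrib)
  ultimately have "(\<Sum>s\<in>PiE {..<k} (\<lambda>_. {..<m}) - PiE {..<k} (\<lambda>_. ?Z). (cmod (phase_prod \<phi> k \<alpha> s))^2)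
     = (\<Sum>b<m. ?f b)^k - (\<Sum>b\<in>?Z. ?f b)^k"
    by (simp add: sum_diff finite_PiE power_sum)
  also have "\<dots> = 1 - (estimate_zero_prob m \<phi> dec \<alpha>)^k"
    using spec unfolding estimate_spec_def estimate_zero_prob_def by simp
  finally show ?thesis unfolding accepting .
qed

end

lemma one_third_power_le:
  assumes "0 < \<epsilon>"
  shows "(1/3::real) ^ nat \<lceil>ln (1 / \<epsilon>)\<rceil> \<le> \<epsilon>"
proof -
  let ?k = "nat \<lceil>ln (1 / \<epsilon>)\<rceil>"
  have "1/3 \<le> exp (-1::real)"
    using exp_le by (simp add: exp_minus field_simps)
  then have "(1/3::real) ^ ?k \<le> exp (-1) ^ ?k" by (rule power_mono) simp
  also have "\<dots> = exp (- real ?k)" by (simp add: exp_of_nat_mult[symmetric])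
  also have "\<dots> \<le> exp (- ln (1 / \<epsilon>))"
    using real_nat_ceiling_ge[of "ln (1 / \<epsilon>)"] by simp
  also have "\<dots> = \<epsilon>" using assms by (simp add: ln_div)
  finally show ?thesis .
qed

locale spectral_decomposition =
  fixes n :: nat and U :: "nat \<Rightarrow> nat \<Rightarrow> complex" and \<psi> :: "nat \<Rightarrow> complex"
    and d0 :: real and w0 :: "nat \<Rightarrow> complex" and J :: nat
    and d :: "nat \<Rightarrow> real" and a :: "nat \<Rightarrow> real" and wp :: "nat \<Rightarrow> nat \<Rightarrow> complex"
    and dm1 :: real and wm1 :: "nat \<Rightarrow> complex"
  assumes unitary: "unitary_mat n U"
    and decomp: "spectral_decomp n U \<psi> d0 w0 J d a wp dm1 wm1"
begin

lemma angle_bounds: "j \<in> {1..J} \<Longrightarrow> 0 < a j \<and> a j < pi"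
  and angle_inj: "inj_on a {1..J}"
  using decomp unfolding spectral_decomp_def by blast+

text \<open>The \<open>2J + 2\<close> eigencomponents of \<open>\<psi>\<close>: index \<open>0\<close> is \<open>w\<^sub>0\<close>, \<open>j\<close> is \<open>w\<^sub>j\<^sup>+\<close>,
  \<open>J + j\<close> is \<open>w\<^sub>j\<^sup>-\<close> and \<open>2J + 1\<close> is \<open>w\<^sub>-\<^sub>1\<close>.\<close>
definition coeff :: "nat \<Rightarrow> real" where
  "coeff i = (if i = 0 then d0 else if i \<le> J then d i else if i \<le> 2*J then d (i - J) else dm1)"

definition vec :: "nat \<Rightarrow> nat \<Rightarrow> complex" where
  "vec i = (if i = 0 then w0 else if i \<le> J then wp i
            else if i \<le> 2*J then (\<lambda>x. cnj (wp (i - J) x)) else wm1)"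

definition phase :: "nat \<Rightarrow> real" where
  "phase i = (if i = 0 then 0 else if i \<le> J then a i else if i \<le> 2*J then - a (i - J) else pi)"

lemma component_cases:
  assumes "i \<le> 2*J+1"
  obtains "i = 0" "coeff i = d0" "vec i = w0" "phase i = 0"
  | j where "j \<in> {1..J}" "0 < a j" "a j < pi"
      "i = j" "coeff i = d j" "vec i = wp j" "phase i = a j"
  | j where "j \<in> {1..J}" "0 < a j" "a j < pi"
      "i = J + j" "coeff i = d j" "vec i = (\<lambda>x. cnj (wp j x))" "phase i = - a j"
  | "i = 2*J+1" "coeff i = dm1" "vec i = wm1" "phase i = pi"
proof -
  consider "i = 0" | "i \<in> {1..J}" | "J < i" "i \<le> 2*J" | "i = 2*J+1"
    using assms by fastforce
  then show thesis
  proof cases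
    case 3
    then have "i - J \<in> {1..J}" "i = J + (i - J)" by auto
    with 3 show thesis using that(3)[of "i - J"] angle_bounds by (simp add: coeff_def vec_def phase_def)
  qed (use that angle_bounds in \<open>auto simp: coeff_def vec_def phase_def\<close>)
qed

lemma sum_components:
  fixes G :: "real \<Rightarrow> (nat \<Rightarrow> complex) \<Rightarrow> real \<Rightarrow> 'b::comm_monoid_add"
  shows "(\<Sum>i\<le>2*J+1. G (coeff i) (vec i) (phase i))
     = G d0 w0 0 + (\<Sum>j\<in>{1..J}. G (d j) (wp j) (a j) + G (d j) (\<lambda>x. cnj (wp j x)) (- a j))
       + G dm1 wm1 pi"
proof -
  let ?g = "\<lambda>i. G (coeff i) (vec i) (phase i)"
  have "{..2*J+1} = insert 0 (insert (2*J+1) ({1..J} \<union> {1+J..J+J}))" by auto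
  then have "(\<Sum>i\<le>2*J+1. ?g i) = ?g 0 + ?g (2*J+1) + (\<Sum>i\<in>{1..J}. ?g i) + (\<Sum>i\<in>{1+J..J+J}. ?g i)"
    by (simp add: sum.union_disjoint ivl_disj_int_two add.assoc)
  also have "(\<Sum>i\<in>{1+J..J+J}. ?g i) = (\<Sum>j\<in>{1..J}. ?g (j + J))"
    by (rule sum.shift_bounds_cl_nat_ivl)
  also have "\<dots> = (\<Sum>j\<in>{1..J}. G (d j) (\<lambda>x. cnj (wp j x)) (- a j))"
    by (rule sum.cong) (auto simp: coeff_def vec_def phase_def)
  also have "(\<Sum>i\<in>{1..J}. ?g i) = (\<Sum>j\<in>{1..J}. G (d j) (wp j) (a j))"
    by (rule sum.cong) (auto simp: coeff_def vec_def phase_def)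
  finally show ?thesis
    by (simp add: coeff_def vec_def phase_def sum.distrib add_ac)
qed

lemma phase_range: "i \<le> 2*J+1 \<Longrightarrow> - pi < phase i \<and> phase i \<le> pi"
  by (erule component_cases) auto

lemma phase_inj:
  assumes "i \<le> 2*J+1" "i' \<le> 2*J+1" "phase i = phase i'"
  shows "i = i'"
  using assms(1,2)
  by (elim component_cases) (use assms(3) in \<open>auto dest: inj_onD[OF angle_inj]\<close>)

lemma component_eigvec:
  assumes "i \<le> 2*J+1" "coeff i \<noteq> 0"
  shows "is_eigvec n U (cis (phase i)) (vec i) \<and> vnorm2 n (vec i) = 1"
  using assms(1) by (cases rule: component_cases) (use assms(2) decomp in \<open>auto simp: spectral_decomp_def\<close>)

text \<open>Eigenvalues of distinct components differ because their phases are distinct points of \<open>(-\<pi>, \<pi>]\<close>.\<close>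
lemma components_orthonormal:
  assumes "i \<le> 2*J+1" "j \<le> 2*J+1" "coeff i \<noteq> 0" "coeff j \<noteq> 0"
  shows "(\<Sum>x<n. cnj (vec j x) * vec i x) = (if i = j then 1 else 0)"
proof (cases "i = j")
  case True
  have "vnorm2 n (vec i) = 1" using component_eigvec assms(1,3) by blast
  then have "complex_of_real (\<Sum>x<n. (cmod (vec i x))^2) = 1" by (simp add: vnorm2_def)
  then have "(\<Sum>x<n. vec i x * cnj (vec i x)) = 1"
    unfolding of_real_sum complex_norm_square .
  then show ?thesis using True by (simp add: mult.commute)
next
  case False
  then have "cis (phase i) \<noteq> cis (phase j)"
    using cis_inj_half_open phase_range phase_inj assms(1,2) by blast
  then have "(\<Sum>x<n. cnj (vec j x) * vec i x) = 0"
    using component_eigvec[OF assms(1,3)] component_eigvec[OF assms(2,4)]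
    by (intro eigvec_orthogonal[OF unitary, of "cis (phase i)" _ "cis (phase j)"]) auto
  then show ?thesis using False by simp
qed

lemma psi_expansion: "x < n \<Longrightarrow> \<psi> x = (\<Sum>i\<le>2*J+1. of_real (coeff i) * vec i x)"
  using decomp sum_components[where G = "\<lambda>c w \<alpha>. of_real c * w x"]
  by (simp add: spectral_decomp_def distrib_left)

lemma norm2_psi: "vnorm2 n \<psi> = (\<Sum>i\<le>2*J+1. (coeff i)^2)"
proof -
  have "vnorm2 n \<psi> = (\<Sum>x<n. (cmod (\<Sum>i\<le>2*J+1. of_real (coeff i) * vec i x))^2)"
    unfolding vnorm2_def using psi_expansion by simp
  also have "\<dots> = (\<Sum>i\<le>2*J+1. (coeff i)^2)"
    by (subst norm2_sum_orthonormal) (simp_all add: components_orthonormal)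
  finally show ?thesis .
qed

lemma detect_amp_expansion:
  "detect_amp \<phi> k d0 w0 J d a wp dm1 wm1 x s
     = (\<Sum>i\<le>2*J+1. (of_real (coeff i) * phase_prod \<phi> k (phase i) s) * vec i x)"
  using sum_components[where G = "\<lambda>c w \<alpha>. (of_real c * phase_prod \<phi> k \<alpha> s) * w x"]
  unfolding detect_amp_def by (simp add: algebra_simps)

lemma accept_prob_expansion:
  assumes "estimate_spec m \<phi> dec \<Delta>"
  shows "detect_accept_prob n m dec \<phi> k d0 w0 J d a wp dm1 wm1
     = (\<Sum>i\<le>2*J+1. (coeff i)^2 * (1 - estimate_zero_prob m \<phi> dec (phase i) ^ k))"
proof -
  let ?Acc = "{s \<in> PiE {..<k} (\<lambda>_. {..<m}). \<exists>i<k. dec (s i) \<noteq> 0}"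
  have "detect_accept_prob n m dec \<phi> k d0 w0 J d a wp dm1 wm1
      = (\<Sum>s\<in>?Acc. \<Sum>x<n. (cmod (detect_amp \<phi> k d0 w0 J d a wp dm1 wm1 x s))^2)"
    unfolding detect_accept_prob_def by (rule sum.swap)
  also have "\<dots> = (\<Sum>s\<in>?Acc. \<Sum>i\<le>2*J+1. (cmod (of_real (coeff i) * phase_prod \<phi> k (phase i) s))^2)"
    unfolding detect_amp_expansion
    by (intro sum.cong[OF refl] norm2_sum_orthonormal finite_atMost) (auto simp: components_orthonormal)
  also have "\<dots> = (\<Sum>i\<le>2*J+1. (coeff i)^2 * (\<Sum>s\<in>?Acc. (cmod (phase_prod \<phi> k (phase i) s))^2))"
    by (subst sum.swap) (simp add: norm_mult power_mult_distrib sum_distrib_left)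
  finally show ?thesis
    by (simp only: estimate_runs_nonzero_prob[OF assms])
qed

lemma norm2_psi_minus_d0: "vnorm2 n \<psi> - d0^2 = (\<Sum>i\<in>{1..2*J+1}. (coeff i)^2)"
  unfolding norm2_psi sum_atMost_split_first[where N = "2*J+1"] by (simp add: coeff_def)

lemma accept_prob_deficit:
  assumes "estimate_spec m \<phi> dec \<Delta>"
  shows "(vnorm2 n \<psi> - d0^2) - detect_accept_prob n m dec \<phi> k d0 w0 J d a wp dm1 wm1
     = (\<Sum>i\<in>{1..2*J+1}. (coeff i)^2 * estimate_zero_prob m \<phi> dec (phase i) ^ k)"
proof -
  have "phase 0 = 0" by (simp add: phase_def)
  then have "detect_accept_prob n m dec \<phi> k d0 w0 J d a wp dm1 wm1
      = (\<Sum>i\<in>{1..2*J+1}. (coeff i)^2 * (1 - estimate_zero_prob m \<phi> dec (phase i) ^ k))"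
    unfolding accept_prob_expansion[OF assms] sum_atMost_split_first[where N = "2*J+1"]
    by (simp add: estimate_zero_prob_at_0[OF assms])
  then show ?thesis
    unfolding norm2_psi_minus_d0 by (simp only: sum_subtractf[symmetric]) (simp add: algebra_simps)
qed

lemma near_weight_eq_QH_tail:
  assumes "0 < \<Delta>"
  shows "(\<Sum>i\<le>2*J+1. if phase i \<noteq> 0 \<and> \<bar>phase i\<bar> < \<Delta> then (coeff i)^2 else 0)
     = QH_tail J d a dm1 d0 (1 / \<Delta>)"
proof -
  have near_iff: "1 / \<Delta> < 1 / \<alpha> \<longleftrightarrow> \<alpha> < \<Delta>" if "0 < \<alpha>" for \<alpha>
    using that assms by (simp add: field_simps)
  have "(\<Sum>i\<le>2*J+1. if phase i \<noteq> 0 \<and> \<bar>phase i\<bar> < \<Delta> then (coeff i)^2 else 0)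
     = (\<Sum>j\<in>{1..J}. 2 * (if a j \<noteq> 0 \<and> \<bar>a j\<bar> < \<Delta> then (d j)^2 else 0))
       + (if pi < \<Delta> then dm1^2 else 0)"
    using sum_components[where G = "\<lambda>c w \<alpha>. if \<alpha> \<noteq> 0 \<and> \<bar>\<alpha>\<bar> < \<Delta> then c^2 else 0"]
    by simp
  also have "\<dots> = (\<Sum>j\<in>{1..J}. if 1 / \<Delta> < 1 / a j then 2 * (d j)^2 else 0)
       + (if 1 / \<Delta> < 1 / pi then dm1^2 else 0)"
  proof -
    have "2 * (if a j \<noteq> 0 \<and> \<bar>a j\<bar> < \<Delta> then (d j)^2 else 0)
        = (if 1 / \<Delta> < 1 / a j then 2 * (d j)^2 else 0)" if "j \<in> {1..J}" for j
      using angle_bounds[OF that] near_iff[of "a j"] by auto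
    then have "(\<Sum>j\<in>{1..J}. 2 * (if a j \<noteq> 0 \<and> \<bar>a j\<bar> < \<Delta> then (d j)^2 else 0))
        = (\<Sum>j\<in>{1..J}. if 1 / \<Delta> < 1 / a j then 2 * (d j)^2 else 0)"
      by (rule sum.cong[OF refl])
    then show ?thesis using near_iff[OF pi_gt_zero] by simp
  qed
  also have "\<dots> = QH_tail J d a dm1 d0 (1 / \<Delta>)"
    unfolding QH_tail_def sum.inter_filter[OF finite_atLeastAtMost] using assms by simp
  finally show ?thesis .
qed

text \<open>Each nonzero phase is either within \<open>\<Delta>\<close> of \<open>0\<close>, and then counted by \<open>QH_tail\<close>,
  or all \<open>k\<close> runs of \<open>Estimate\<close> return 0 with probability at most \<open>(1/3)\<^sup>k\<close>.\<close>
lemma accept_prob_approx: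
  assumes "vnorm2 n \<psi> \<le> 1" "0 < \<Delta>" and spec: "estimate_spec m \<phi> dec \<Delta>"
    and "(1/3) ^ k \<le> \<epsilon>" "QH_tail J d a dm1 d0 (1 / \<Delta>) \<le> \<epsilon>"
  shows "\<bar>detect_accept_prob n m dec \<phi> k d0 w0 J d a wp dm1 wm1 - (vnorm2 n \<psi> - d0^2)\<bar> \<le> 2 * \<epsilon>"
proof -
  let ?q = "\<lambda>i. estimate_zero_prob m \<phi> dec (phase i)"
  let ?near = "\<lambda>i. if phase i \<noteq> 0 \<and> \<bar>phase i\<bar> < \<Delta> then (coeff i)^2 else 0"
  have eps_nonneg: "0 \<le> \<epsilon>" by (rule order_trans[OF _ assms(4)]) simp
  have "(coeff i)^2 * ?q i ^ k \<le> (coeff i)^2 * \<epsilon> + ?near i" if "i \<in> {1..2*J+1}" for i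
  proof (cases "\<bar>phase i\<bar> < \<Delta>")
    case True
    have "phase i \<noteq> 0" using phase_inj[of i 0] that by (auto simp: phase_def)
    moreover have "?q i ^ k \<le> 1"
      using estimate_zero_prob_nonneg estimate_zero_prob_le_1[OF spec] by (simp add: power_le_one)
    moreover have "0 \<le> (coeff i)^2 * \<epsilon>" using eps_nonneg by simp
    ultimately show ?thesis
      using True mult_left_mono[of "?q i ^ k" 1 "(coeff i)^2"] by simp
  next
    case False
    then have "?q i \<le> 1/3"
      using estimate_zero_prob_far[OF spec] phase_range that by auto
    then have "?q i ^ k \<le> \<epsilon>"
      using estimate_zero_prob_nonneg power_mono assms(4) by (meson order_trans)
    then show ?thesis using False by (simp add: mult_left_mono)
  qed
  then have "(\<Sum>i\<in>{1..2*J+1}. (coeff i)^2 * ?q i ^ k)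
      \<le> (\<Sum>i\<in>{1..2*J+1}. (coeff i)^2 * \<epsilon> + ?near i)"
    by (rule sum_mono)
  also have "\<dots> = (vnorm2 n \<psi> - d0^2) * \<epsilon> + (\<Sum>i\<le>2*J+1. ?near i)"
    unfolding norm2_psi_minus_d0 sum_atMost_split_first[where N = "2*J+1"]
    by (simp add: sum.distrib sum_distrib_right distrib_right phase_def)
  also have "\<dots> \<le> 1 * \<epsilon> + \<epsilon>"
  proof (intro add_mono mult_right_mono)
    show "vnorm2 n \<psi> - d0^2 \<le> 1" using assms(1) zero_le_power2[of d0] by linarith
  qed (use eps_nonneg assms(5) near_weight_eq_QH_tail[OF assms(2)] in simp_all)
  finally have "(vnorm2 n \<psi> - d0^2) - detect_accept_prob n m dec \<phi> k d0 w0 J d a wp dm1 wm1 \<le> 2 * \<epsilon>"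
    unfolding accept_prob_deficit[OF spec] by simp
  moreover have "0 \<le> (vnorm2 n \<psi> - d0^2) - detect_accept_prob n m dec \<phi> k d0 w0 J d a wp dm1 wm1"
    unfolding accept_prob_deficit[OF spec]
    using estimate_zero_prob_nonneg by (intro sum_nonneg) simp
  ultimately show ?thesis by linarith
qed

lemma accept_prob_eq_0:
  assumes "estimate_spec m \<phi> dec \<Delta>" "\<bar>d0\<bar> = sqrt (vnorm2 n \<psi>)"
  shows "detect_accept_prob n m dec \<phi> k d0 w0 J d a wp dm1 wm1 = 0"
proof -
  have "0 \<le> vnorm2 n \<psi>" unfolding vnorm2_def by (intro sum_nonneg) simp
  then have "d0^2 = vnorm2 n \<psi>" using assms(2) by (metis power2_abs real_sqrt_pow2)
  moreover have "0 \<le> (vnorm2 n \<psi> - d0^2) - detect_accept_prob n m dec \<phi> k d0 w0 J d a wp dm1 wm1"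
    unfolding accept_prob_deficit[OF assms(1)]
    using estimate_zero_prob_nonneg by (intro sum_nonneg) simp
  ultimately show ?thesis using detect_accept_prob_nonneg[of n m dec \<phi> k d0 w0 J d a wp dm1 wm1] by linarith
qed

end

lemma ceiling_ln_mult_le:
  fixes \<epsilon> \<Delta> K :: real
  assumes "0 < \<Delta>" "0 < \<epsilon>" "\<epsilon> \<le> 1/2" "real calls \<le> K / \<Delta>"
  shows "real (nat \<lceil>ln (1 / \<epsilon>)\<rceil> * calls) \<le> (1 + 1 / ln 2) * max K 0 * ln (1 / \<epsilon>) / \<Delta>"
proof -
  define L where "L = ln (1 / \<epsilon>)"
  have ln2: "0 < ln (2::real)" by simp
  have "ln 2 \<le> L"
    unfolding L_def using assms(2,3) by (intro ln_mono) (simp_all add: field_simps)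
  then have "1 \<le> L / ln 2" and L_pos: "0 < L" using ln2 by (simp, linarith)
  have "real (nat \<lceil>L\<rceil>) \<le> L + 1" using L_pos by linarith
  also have "\<dots> \<le> (1 + 1 / ln 2) * L" using \<open>1 \<le> L / ln 2\<close> L_pos by (simp add: field_simps)
  finally have "real (nat \<lceil>L\<rceil>) \<le> (1 + 1 / ln 2) * L" .
  moreover have "real calls \<le> max K 0 / \<Delta>"
    using assms(1,4) by (smt (verit) divide_right_mono max.cobounded1)
  ultimately have "real (nat \<lceil>L\<rceil>) * real calls \<le> ((1 + 1 / ln 2) * L) * (max K 0 / \<Delta>)"
    using L_pos by (intro mult_mono) auto
  then show ?thesis unfolding L_def by (simp add: mult_ac)
qed

lemma detect_accept_prob_approx:
  assumes "unitary_mat n U" "vnorm2 n \<psi> \<le> 1" "spectral_decomp n U \<psi> d0 w0 J d a wp dm1 wm1"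
    "0 < \<Delta>" "estimate_spec m \<phi> dec \<Delta>" "0 < \<epsilon>" "QH_tail J d a dm1 d0 (1 / \<Delta>) \<le> \<epsilon>"
  defines "P \<equiv> detect_accept_prob n m dec \<phi> (nat \<lceil>ln (1 / \<epsilon>)\<rceil>) d0 w0 J d a wp dm1 wm1"
  shows "\<bar>P - (vnorm2 n \<psi> - d0^2)\<bar> \<le> 2 * \<epsilon>" "\<bar>d0\<bar> = sqrt (vnorm2 n \<psi>) \<Longrightarrow> P = 0"
proof -
  interpret spectral_decomposition n U \<psi> d0 w0 J d a wp dm1 wm1
    using assms(1,3) by unfold_locales
  show "\<bar>P - (vnorm2 n \<psi> - d0^2)\<bar> \<le> 2 * \<epsilon>"
    unfolding P_def using assms(2,4,5) one_third_power_le[OF assms(6)] assms(7)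
    by (rule accept_prob_approx)
  show "\<bar>d0\<bar> = sqrt (vnorm2 n \<psi>) \<Longrightarrow> P = 0"
    unfolding P_def using assms(5) by (rule accept_prob_eq_0)
qed

theorem lemma1:
  shows "\<exists>c0::real. c0 > 0 \<and> (\<exists>C::real.
     (\<forall>(n::nat) (m::nat) (U::nat \<Rightarrow> nat \<Rightarrow> complex) (\<psi>::nat \<Rightarrow> complex)
        (d0::real) (w0::nat \<Rightarrow> complex) (J::nat) (d::nat \<Rightarrow> real) (a::nat \<Rightarrow> real)
        (wp::nat \<Rightarrow> nat \<Rightarrow> complex) (dm1::real) (wm1::nat \<Rightarrow> complex)
        (\<phi>::real \<Rightarrow> nat \<Rightarrow> complex) (dec::nat \<Rightarrow> real) (\<Delta>::real) (\<epsilon>::real).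
        unitary_mat n U \<and> real_mat n U \<and> real_vec n \<psi> \<and> vnorm2 n \<psi> \<le> 1 \<and>
        spectral_decomp n U \<psi> d0 w0 J d a wp dm1 wm1 \<and>
        0 < \<Delta> \<and> estimate_spec m \<phi> dec \<Delta> \<and>
        0 < \<epsilon> \<and> \<epsilon> < 1 \<and> QH_tail J d a dm1 d0 (1 / \<Delta>) \<le> \<epsilon> \<longrightarrow>
        (let k = nat \<lceil>c0 * ln (1 / \<epsilon>)\<rceil>;
             P = detect_accept_prob n m dec \<phi> k d0 w0 J d a wp dm1 wm1
         in \<bar>P - (vnorm2 n \<psi> - d0^2)\<bar> \<le> C * \<epsilon> \<and>
            (\<bar>d0\<bar> = sqrt (vnorm2 n \<psi>) \<longrightarrow> P = 0))) \<and>
     (\<forall>K::real. \<exists>C'::real. \<forall>(\<Delta>::real) (\<epsilon>::real) (calls::nat).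
        0 < \<Delta> \<and> 0 < \<epsilon> \<and> \<epsilon> \<le> 1/2 \<and> real calls \<le> K / \<Delta> \<longrightarrow>
        real (nat \<lceil>c0 * ln (1 / \<epsilon>)\<rceil> * calls) \<le> C' * ln (1 / \<epsilon>) / \<Delta>))"
proof (rule exI[of _ 1], rule conjI[OF _ exI[of _ 2]], simp, intro conjI allI impI)
  fix K :: real
  show "\<exists>C'. \<forall>\<Delta> \<epsilon> calls. 0 < \<Delta> \<and> 0 < \<epsilon> \<and> \<epsilon> \<le> 1/2 \<and> real calls \<le> K / \<Delta> \<longrightarrow>
          real (nat \<lceil>1 * ln (1 / \<epsilon>)\<rceil> * calls) \<le> C' * ln (1 / \<epsilon>) / \<Delta>"
    using ceiling_ln_mult_le[of _ _ _ K] by (intro exI[of _ "(1 + 1 / ln 2) * max K 0"]) simp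
qed (auto simp: Let_def detect_accept_prob_approx)

end
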